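(* Consider the one-hop wireless network model described in the context, with $n$ source-destination pairs and i.i.d. channel powers $\gamma_{i,j}$ with c.d.f. $F$ and mean $\mu$. Suppose $F$ satisfies condition set 1 and is of NHT type or of HT type (as defined in the context). Define $$G(x)\triangleq \frac{x}{1-F\left(\beta\mu x/2\right)},$$ where $\beta$ is the SINR target. Then, with high probability (i.e., with probability tending to $1$ as $n\to\infty$), the throughput of the network is lower bounded as $$T=\Omega\left(G^{-1}(n)\right),$$ this throughput being achieved by activating the source-destination pairs with the largest direct-link powers $\gamma_{i,i}$ and keeping all other sources silent.
   Context: Network model: there are $n$ sources $S_1,\dots,S_n$ and $n$ destinations $D_1,\dots,D_n$; $S_i$ wishes to communicate with $D_i$ in a single hop. The channel power gain from $S_i$ to $D_j$ is a random variable $\gamma_{i,j}\ge 0$; all $\gamma_{i,j}$, $i,j=1,\dots,n$, are i.i.d. with p.d.f. $f$, c.d.f. $F$, and mean $\mathbb{E}\{\gamma_{i,j}\}=\mu$. In a time slot a subset $\mathbb{S}\subset\{S_1,\dots,S_n\}$ of sources is active, each transmitting with power $1$; the others are silent. The SINR at $D_i$ is $SINR_i=\frac{\gamma_{i,i}}{N_0+\sum_{S_k\in\mathbb{S},k\ne i}\gamma_{k,i}}$ if $S_i\in\mathbb{S}$ (and $0$ otherwise), where $N_0\ge 0$ is the noise variance; $D_i$ is successful if $SINR_i>\beta$ for a fixed constant $\beta>0$. The throughput $T(\mathbb{S})$ is the number of successful destinations. An event holds with high probability (w.h.p.) if its probability tends to $1$ as $n\to\infty$. $\Omega$ is the usual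 asymptotic notation as $n\to\infty$. Condition set 1: with $h(x)\triangleq f(x)/(1-F(x))$, (i) $F^{-1}(1)=\infty$ (unbounded support), and (ii) either $\lim_{x\to\infty} x h(x)=c_0>0$ for some constant $c_0$, or $\lim_{x\to\infty}\frac{d}{dx}\frac{1}{h(x)}=0$. NHT (non-heavy-tailed, super-exponential) type: a random variable $X$ with c.d.f. $F$ satisfies $\mathbb{E}\{e^{sX}\}<\infty$ for some $s>0$ (Cramér's condition). HT (heavy-tailed, sub-exponential) type: $F$ has one of the following tails: (a) regularly varying: $1-F(x)=L(x)/x^{\alpha}$ for $x>0$, with $\alpha>2$ and $L$ slowly varying; (b) log-normal type: $1-F(x)\sim c\,x^{b}e^{-\lambda(\log x)^{g}}$ as $x\to\infty$ with $g>1$, $\lambda>0$, $c>0$, $b\in\mathbb{R}$; (c) Weibull-like: $1-F(x)\sim c\,x^{b}e^{-\lambda x^{a}}$ as $x\to\infty$ with $0<a<0.5$, $\lambda>0$, $c>0$, $b\in\mathbb{R}$. *)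

theory Defs
  imports "HOL-Probability.Probability" "HOL-Library.Landau_Symbols"
begin

definition hazard :: "(real \<Rightarrow> real) \<Rightarrow> (real \<Rightarrow> real) \<Rightarrow> real \<Rightarrow> real" where
  "hazard f F x = f x / (1 - F x)"

text \<open>Condition set 1: (i) unbounded support, F^{-1}(1) = infinity, i.e. F x < 1 for all x;
 (ii) x h(x) tends to some c0 > 0, or d/dx (1/h(x)) tends to 0 as x tends to infinity.\<close>
definition condition_set_1 :: "(real \<Rightarrow> real) \<Rightarrow> (real \<Rightarrow> real) \<Rightarrow> bool" where
  "condition_set_1 f F \<longleftrightarrow>
     (\<forall>x. F x < 1) \<and>
     ((\<exists>c0>0. ((\<lambda>x. x * hazard f F x) \<longlongrightarrow> c0) at_top) \<or>
      (\<exists>d. (\<forall>\<^sub>F x in at_top. ((\<lambda>y. 1 / hazard f F y) has_real_derivative d x) (at x)) \<and>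
           (d \<longlongrightarrow> 0) at_top))"

definition slowly_varying :: "(real \<Rightarrow> real) \<Rightarrow> bool" where
  "slowly_varying L \<longleftrightarrow> (\<forall>\<^sub>F x in at_top. L x > 0) \<and>
     (\<forall>t>0. ((\<lambda>x. L (t * x) / L x) \<longlongrightarrow> 1) at_top)"

definition NHT_type :: "'a measure \<Rightarrow> ('a \<Rightarrow> real) \<Rightarrow> bool" where
  "NHT_type M X \<longleftrightarrow> (\<exists>s>0. integrable M (\<lambda>\<omega>. exp (s * X \<omega>)))"

definition HT_type :: "(real \<Rightarrow> real) \<Rightarrow> bool" where
  "HT_type F \<longleftrightarrow>
     (\<exists>\<alpha> L. \<alpha> > 2 \<and> slowly_varying L \<and> (\<forall>x>0. 1 - F x = L x / x powr \<alpha>)) \<or>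
     (\<exists>c b lam g. c > 0 \<and> lam > 0 \<and> g > 1 \<and>
        (\<lambda>x. 1 - F x) \<sim>[at_top] (\<lambda>x. c * x powr b * exp (- lam * (ln x) powr g))) \<or>
     (\<exists>c b lam a. c > 0 \<and> lam > 0 \<and> 0 < a \<and> a < 0.5 \<and>
        (\<lambda>x. 1 - F x) \<sim>[at_top] (\<lambda>x. c * x powr b * exp (- lam * x powr a)))"

text \<open>Throughput of active set S: number of i in S with SINR_i > beta, where
  SINR_i = gamma i i / (N0 + sum_{k in S, k ~= i} gamma k i); written multiplicatively
  (SINR_i > beta iff gamma i i > beta * (N0 + interference)) to avoid division by zero.\<close>
definition throughput :: "(nat \<Rightarrow> nat \<Rightarrow> real) \<Rightarrow> real \<Rightarrow> real \<Rightarrow> nat set \<Rightarrow> nat" where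
  "throughput g N0 \<beta> S = card {i \<in> S. g i i > \<beta> * (N0 + (\<Sum>k\<in>S - {i}. g k i))}"

definition top_set :: "(nat \<Rightarrow> nat \<Rightarrow> real) \<Rightarrow> nat \<Rightarrow> nat \<Rightarrow> nat set \<Rightarrow> bool" where
  "top_set g n k S \<longleftrightarrow> S \<subseteq> {..<n} \<and> card S = k \<and>
     (\<forall>i\<in>S. \<forall>j\<in>{..<n} - S. g j j \<le> g i i)"

definition Gfun :: "(real \<Rightarrow> real) \<Rightarrow> real \<Rightarrow> real \<Rightarrow> real \<Rightarrow> real" where
  "Gfun F \<beta> \<mu> x = x / (1 - F (\<beta> * \<mu> * x / 2))"

definition Ginv :: "(real \<Rightarrow> real) \<Rightarrow> real \<Rightarrow> real \<Rightarrow> real \<Rightarrow> real" where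
  "Ginv F \<beta> \<mu> y = Inf {x. x \<ge> 0 \<and> Gfun F \<beta> \<mu> x \<ge> y}"

end

(*
  Let L = G\<^sup>-\<^sup>1(n) and activate the k \<approx> L/32 pairs with the largest direct gains. Put
  \<theta> = \<beta>(N0 + 4k\<mu>) \<le> \<beta>\<mu>L/4. By the definition of G\<^sup>-\<^sup>1, n(1 - F(\<beta>\<mu>L/4)) > L/2, so the
  expected number of direct gains above \<theta> is at least 4k and a multiplicative Chernoff
  bound shows that w.h.p. at least k of them exceed \<theta>; then every active pair has direct
  gain above \<theta>. Such a pair succeeds as soon as its interference from the other k - 1
  active sources stays below 4k\<mu>, which by Markov fails with probability at most 1/4,
  independently across receivers; Hoeffding makes fewer than k/2 failures likely. The
  active set is determined by the diagonal gains only, the interference by off-diagonal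
  ones, so conditioning on which set is active costs nothing, and since ties have
  probability zero the events "S is the active set" are disjoint. Hence w.h.p. the
  throughput is at least k/2 \<ge> L/128.
*)

theory Submission
  imports Defs "HOL-Real_Asymp.Real_Asymp"
begin

context prob_space
begin

lemma prob_indep_eq_zero:
  fixes X Y :: "'a \<Rightarrow> real"
  assumes indep: "indep_var borel X borel Y" and Y: "distributed M lborel Y f"
  shows "prob {\<omega>\<in>space M. X \<omega> = Y \<omega>} = 0"
proof -
  have [measurable]: "X \<in> borel_measurable M" "Y \<in> borel_measurable M"
    using indep by (auto dest: indep_var_rv1 indep_var_rv2)
  interpret PY: prob_space "distr M borel Y" by (rule prob_space_distr) simp
  have atom: "emeasure (distr M borel Y) {x} = 0" for x
  proof -
    have "emeasure (distr M borel Y) {x} = (\<integral>\<^sup>+y. f y * indicator {x} y \<partial>lborel)"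
      using distributed_emeasure[OF Y, of "{x}"] by (simp add: emeasure_distr)
    also have "\<dots> = 0"
    proof -
      have "AE y in lborel. f y * indicator {x} y = 0"
        using AE_lborel_singleton[of x] by eventually_elim simp
      then show ?thesis by (subst nn_integral_cong_AE) auto
    qed
    finally show ?thesis .
  qed
  define D where "D = {p \<in> space (borel \<Otimes>\<^sub>M borel). fst p = (snd p :: real)}"
  have [measurable]: "D \<in> sets (borel \<Otimes>\<^sub>M borel)" unfolding D_def by measurable
  have "{\<omega>\<in>space M. X \<omega> = Y \<omega>} = (\<lambda>\<omega>. (X \<omega>, Y \<omega>)) -` D \<inter> space M"
    by (auto simp: D_def space_pair_measure)
  then have "emeasure M {\<omega>\<in>space M. X \<omega> = Y \<omega>} =
      emeasure (distr M (borel \<Otimes>\<^sub>M borel) (\<lambda>\<omega>. (X \<omega>, Y \<omega>))) D"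
    by (simp add: emeasure_distr)
  also have "\<dots> = emeasure (distr M borel X \<Otimes>\<^sub>M distr M borel Y) D"
    using indep by (simp add: indep_var_distribution_eq)
  also have "\<dots> = (\<integral>\<^sup>+x. emeasure (distr M borel Y) (Pair x -` D) \<partial>distr M borel X)"
    by (rule PY.emeasure_pair_measure_alt) simp
  also have "\<dots> = 0"
    by (simp add: D_def atom vimage_def space_pair_measure)
  finally show ?thesis by (simp add: measure_def)
qed

lemma prob_sum_ge_Markov:
  fixes Z :: "'j \<Rightarrow> 'a \<Rightarrow> real"
  assumes "finite J" "\<And>j. j \<in> J \<Longrightarrow> integrable M (Z j)" "\<And>j \<omega>. j \<in> J \<Longrightarrow> 0 \<le> Z j \<omega>"
    and "\<And>j. j \<in> J \<Longrightarrow> expectation (Z j) = \<mu>" and "0 < t"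
  shows "prob {\<omega>\<in>space M. t \<le> (\<Sum>j\<in>J. Z j \<omega>)} \<le> real (card J) * \<mu> / t"
proof -
  have "AE \<omega> in M. 0 \<le> (\<Sum>j\<in>J. Z j \<omega>)"
    using assms(3) by (auto intro: sum_nonneg)
  then have "prob {\<omega>\<in>space M. t \<le> (\<Sum>j\<in>J. Z j \<omega>)} \<le> expectation (\<lambda>\<omega>. \<Sum>j\<in>J. Z j \<omega>) / t"
    using assms by (intro integral_Markov_inequality_measure[of _ _ "space M"]) auto
  also have "expectation (\<lambda>\<omega>. \<Sum>j\<in>J. Z j \<omega>) = real (card J) * \<mu>"
    using assms by (subst Bochner_Integration.integral_sum) auto
  finally show ?thesis .
qed

lemma expectation_Bernoulli:
  assumes [measurable]: "Y \<in> borel_measurable M" and Y: "\<And>\<omega>. Y \<omega> = 0 \<or> Y \<omega> = 1"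
  shows "expectation Y = prob {\<omega>\<in>space M. Y \<omega> = 1}"
proof -
  have "expectation Y = expectation (indicator {\<omega>\<in>space M. Y \<omega> = 1})"
  proof (rule Bochner_Integration.integral_cong[OF refl])
    show "Y \<omega> = indicator {\<omega>\<in>space M. Y \<omega> = 1} \<omega>" if "\<omega> \<in> space M" for \<omega>
      using that Y[of \<omega>] by (auto simp: indicator_def)
  qed
  then show ?thesis by simp
qed

lemma expectation_exp_sum_Bernoulli:
  fixes Y :: "'i \<Rightarrow> 'a \<Rightarrow> real"
  assumes I: "finite I" and indep: "indep_vars (\<lambda>_. borel) Y I"
    and Y: "\<And>i \<omega>. i \<in> I \<Longrightarrow> Y i \<omega> = 0 \<or> Y i \<omega> = 1"
  shows "expectation (\<lambda>\<omega>. exp (s * (\<Sum>i\<in>I. Y i \<omega>))) =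
    (\<Prod>i\<in>I. 1 + (exp s - 1) * prob {\<omega>\<in>space M. Y i \<omega> = 1})"
proof -
  have integrable: "integrable M (Y i)" if i: "i \<in> I" for i
  proof (rule integrable_const_bound[where B=1])
    show "AE \<omega> in M. norm (Y i \<omega>) \<le> 1"
      using Y[OF i] by (intro AE_I2) (metis norm_one norm_zero order_refl zero_le_one)
    show "Y i \<in> borel_measurable M"
      using indep i by (auto simp: indep_vars_def)
  qed
  have affine: "exp (s * Y i \<omega>) = 1 + (exp s - 1) * Y i \<omega>" if "i \<in> I" for i \<omega>
    using Y[OF that, of \<omega>] by auto
  have "expectation (\<lambda>\<omega>. exp (s * (\<Sum>i\<in>I. Y i \<omega>))) =
      expectation (\<lambda>\<omega>. \<Prod>i\<in>I. 1 + (exp s - 1) * Y i \<omega>)"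
    using I by (simp add: sum_distrib_left exp_sum affine cong: prod.cong)
  also have "\<dots> = (\<Prod>i\<in>I. expectation (\<lambda>\<omega>. 1 + (exp s - 1) * Y i \<omega>))"
  proof (rule indep_vars_lebesgue_integral[OF I])
    show "indep_vars (\<lambda>_. borel) (\<lambda>i \<omega>. 1 + (exp s - 1) * Y i \<omega>) I"
      by (rule indep_vars_compose2[OF indep]) auto
    show "integrable M (\<lambda>\<omega>. 1 + (exp s - 1) * Y i \<omega>)" if "i \<in> I" for i
      using integrable[OF that] by simp
  qed
  also have "\<dots> = (\<Prod>i\<in>I. 1 + (exp s - 1) * prob {\<omega>\<in>space M. Y i \<omega> = 1})"
  proof (rule prod.cong[OF refl])
    fix i assume i: "i \<in> I"
    show "expectation (\<lambda>\<omega>. 1 + (exp s - 1) * Y i \<omega>) =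
        1 + (exp s - 1) * prob {\<omega>\<in>space M. Y i \<omega> = 1}"
      using i Y integrable[OF i] by (simp add: expectation_Bernoulli prob_space)
  qed
  finally show ?thesis .
qed

text \<open>A multiplicative Chernoff bound; Hoeffding's additive bound is useless here because
  the success probability \<open>q\<close> may tend to zero.\<close>

lemma prob_sum_Bernoulli_less:
  fixes Y :: "'i \<Rightarrow> 'a \<Rightarrow> real"
  assumes I: "finite I" and indep: "indep_vars (\<lambda>_. borel) Y I"
    and Y: "\<And>i \<omega>. i \<in> I \<Longrightarrow> Y i \<omega> = 0 \<or> Y i \<omega> = 1"
    and q: "\<And>i. i \<in> I \<Longrightarrow> q \<le> prob {\<omega>\<in>space M. Y i \<omega> = 1}" "0 \<le> q"
    and k: "4 * k \<le> real (card I) * q"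
  shows "prob {\<omega>\<in>space M. (\<Sum>i\<in>I. Y i \<omega>) < k} \<le> exp (- k)"
proof -
  have [measurable]: "i \<in> I \<Longrightarrow> Y i \<in> borel_measurable M" for i
    using indep by (auto simp: indep_vars_def)
  define W where "W \<omega> = exp (- (\<Sum>i\<in>I. Y i \<omega>))" for \<omega>
  have W_le_1: "W \<omega> \<le> 1" for \<omega>
    using Y by (auto simp: W_def intro!: sum_nonneg) (metis order_refl zero_le_one)
  have [measurable]: "W \<in> borel_measurable M"
    unfolding W_def using I by measurable
  have "prob {\<omega>\<in>space M. (\<Sum>i\<in>I. Y i \<omega>) < k} \<le> prob {\<omega>\<in>space M. exp (- k) \<le> W \<omega>}"
    by (intro finite_measure_mono) (auto simp: W_def)
  also have "\<dots> \<le> expectation W / exp (- k)"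
    using W_le_1
    by (intro integral_Markov_inequality_measure[of _ _ "space M"] integrable_const_bound[of _ 1])
      (auto simp: W_def)
  also have "expectation W \<le> exp (- (1 - exp (- 1)) * (real (card I) * q))"
  proof -
    have "expectation W = (\<Prod>i\<in>I. 1 + (exp (- 1) - 1) * prob {\<omega>\<in>space M. Y i \<omega> = 1})"
      unfolding W_def using expectation_exp_sum_Bernoulli[OF I indep Y, of "- 1"] by simp
    also have "\<dots> \<le> (\<Prod>i\<in>I. exp (- (1 - exp (- 1)) * q))"
    proof (rule prod_mono)
      fix i assume i: "i \<in> I"
      have "(1 - exp (- 1)) * prob {\<omega>\<in>space M. Y i \<omega> = 1} \<le> 1 * 1"
        by (intro mult_mono) simp_all
      then have "0 \<le> 1 + (exp (- 1) - 1) * prob {\<omega>\<in>space M. Y i \<omega> = 1}"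
        by (simp add: algebra_simps)
      moreover have "1 + (exp (- 1) - 1) * prob {\<omega>\<in>space M. Y i \<omega> = 1} \<le> 1 + - (1 - exp (- 1)) * q"
        using mult_left_mono[OF q(1)[OF i], of "1 - exp (- 1)"] by (simp add: algebra_simps)
      ultimately show "0 \<le> 1 + (exp (- 1) - 1) * prob {\<omega>\<in>space M. Y i \<omega> = 1} \<and>
          1 + (exp (- 1) - 1) * prob {\<omega>\<in>space M. Y i \<omega> = 1} \<le> exp (- (1 - exp (- 1)) * q)"
        by (meson exp_ge_add_one_self order_trans)
    qed
    also have "\<dots> = exp (- (1 - exp (- 1)) * (real (card I) * q))"
      by (simp add: exp_of_nat_mult[symmetric] mult_ac)
    finally show ?thesis .
  qed
  then have "expectation W / exp (- k) \<le> exp (- (1 - exp (- 1)) * (real (card I) * q)) / exp (- k)"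
    by (simp add: divide_right_mono)
  also have "\<dots> \<le> exp (- k)"
  proof -
    have "2 \<le> exp (1 :: real)"
      using exp_ge_add_one_self[of 1] by simp
    then have "exp (- 1 :: real) \<le> 1 / 2"
      by (simp add: exp_minus field_simps)
    then have "1 / 2 * (real (card I) * q) \<le> (1 - exp (- 1)) * (real (card I) * q)"
      using q(2) by (intro mult_right_mono) simp_all
    then have "2 * k \<le> (1 - exp (- 1)) * (real (card I) * q)"
      using k by linarith
    then show ?thesis
      by (simp add: exp_diff[symmetric] algebra_simps)
  qed
  finally show ?thesis .
qed

lemma prob_sum_Bernoulli_ge_half:
  fixes Y :: "'i \<Rightarrow> 'a \<Rightarrow> real"
  assumes I: "finite I" "I \<noteq> {}" and indep: "indep_vars (\<lambda>_. borel) Y I"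
    and Y: "\<And>i \<omega>. i \<in> I \<Longrightarrow> Y i \<omega> = 0 \<or> Y i \<omega> = 1"
    and p: "\<And>i. i \<in> I \<Longrightarrow> prob {\<omega>\<in>space M. Y i \<omega> = 1} \<le> 1 / 4"
  shows "prob {\<omega>\<in>space M. real (card I) / 2 \<le> (\<Sum>i\<in>I. Y i \<omega>)} \<le> exp (- real (card I) / 8)"
proof -
  interpret Hoeffding_ineq M I Y "\<lambda>_. 0" "\<lambda>_. 1" "\<Sum>i\<in>I. expectation (Y i)"
  proof unfold_locales
    show "AE \<omega> in M. Y i \<omega> \<in> {0..1}" if "i \<in> I" for i
      using Y[OF that] by (intro AE_I2) (metis atLeastAtMost_iff order.refl zero_le_one)
  qed (use I indep in simp_all)
  have "(\<Sum>i\<in>I. expectation (Y i)) \<le> (\<Sum>i\<in>I. 1 / 4)"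
    using p Y by (intro sum_mono) (simp add: expectation_Bernoulli)
  then have mean: "(\<Sum>i\<in>I. expectation (Y i)) \<le> real (card I) / 4"
    by simp
  define \<epsilon> where "\<epsilon> = real (card I) / 2 - (\<Sum>i\<in>I. expectation (Y i))"
  have \<epsilon>: "real (card I) / 4 \<le> \<epsilon>"
    using mean by (simp add: \<epsilon>_def)
  have card: "0 < real (card I)"
    using I by (simp add: card_gt_0_iff)
  have "prob {\<omega>\<in>space M. real (card I) / 2 \<le> (\<Sum>i\<in>I. Y i \<omega>)} \<le> exp (- 2 * \<epsilon>\<^sup>2 / real (card I))"
    using Hoeffding_ineq_ge[of \<epsilon>] \<epsilon> card by (simp add: \<epsilon>_def)
  also have "\<dots> \<le> exp (- real (card I) / 8)"
  proof -
    have "(real (card I) / 4)\<^sup>2 \<le> \<epsilon>\<^sup>2"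
      using \<epsilon> card by (intro power_mono) auto
    then show ?thesis
      using card by (simp add: field_simps power2_eq_square)
  qed
  finally show ?thesis .
qed

end

lemma top_set_gt_threshold:
  assumes top: "top_set g n k S" and many: "k \<le> card {j\<in>{..<n}. \<theta> < g j j}" and i: "i \<in> S"
  shows "\<theta> < g i i"
proof (rule ccontr)
  assume below: "\<not> \<theta> < g i i"
  have fin: "finite S"
    using top finite_subset by (auto simp: top_set_def)
  have "{j\<in>{..<n}. \<theta> < g j j} \<subseteq> S - {i}"
    using top i below by (force simp: top_set_def)
  then have "card {j\<in>{..<n}. \<theta> < g j j} \<le> card (S - {i})"
    using fin by (intro card_mono) auto
  also have "\<dots> < card S"
    using fin i by (rule card_Diff1_less)
  finally have "card {j\<in>{..<n}. \<theta> < g j j} < k"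
    using top by (simp add: top_set_def)
  then show False
    using many by simp
qed

lemma throughput_top_set_ge:
  assumes top: "top_set g n k S" and \<beta>: "0 \<le> \<beta>"
    and many: "k \<le> card {j\<in>{..<n}. \<beta> * (N0 + t) < g j j}"
  shows "k \<le> throughput g N0 \<beta> S + card {i\<in>S. t \<le> (\<Sum>j\<in>S - {i}. g j i)}"
    (is "_ \<le> _ + card ?Interfered")
proof -
  let ?Succeeding = "{i\<in>S. \<beta> * (N0 + (\<Sum>j\<in>S - {i}. g j i)) < g i i}"
  have fin: "finite S"
    using top finite_subset by (auto simp: top_set_def)
  have "S \<subseteq> ?Succeeding \<union> ?Interfered"
  proof
    fix i assume i: "i \<in> S"
    have "\<beta> * (N0 + (\<Sum>j\<in>S - {i}. g j i)) \<le> \<beta> * (N0 + t)" if "(\<Sum>j\<in>S - {i}. g j i) < t"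
      using that \<beta> by (intro mult_left_mono) auto
    then have "\<beta> * (N0 + (\<Sum>j\<in>S - {i}. g j i)) < g i i" if "(\<Sum>j\<in>S - {i}. g j i) < t"
      using that top_set_gt_threshold[OF top many i] by fastforce
    then show "i \<in> ?Succeeding \<union> ?Interfered"
      using i by force
  qed
  then have "card S \<le> card (?Succeeding \<union> ?Interfered)"
    using fin by (intro card_mono) auto
  also have "\<dots> \<le> throughput g N0 \<beta> S + card ?Interfered"
    unfolding throughput_def by (rule card_Un_le)
  finally show ?thesis
    using top by (simp add: top_set_def)
qed

context
  fixes F :: "real \<Rightarrow> real" and \<beta> \<mu> :: real
  assumes mono_F: "mono F" and F_nonneg: "\<And>x. 0 \<le> F x" and F_less_1: "\<And>x. F x < 1"
    and \<beta>\<mu>: "0 \<le> \<beta> * \<mu>"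
begin

lemma Gfun_mono:
  assumes "0 \<le> x" "x \<le> y"
  shows "Gfun F \<beta> \<mu> x \<le> Gfun F \<beta> \<mu> y"
proof -
  have "F (\<beta> * \<mu> * x / 2) \<le> F (\<beta> * \<mu> * y / 2)"
    using assms \<beta>\<mu> by (intro monoD[OF mono_F] divide_right_mono mult_left_mono) auto
  then show ?thesis
    unfolding Gfun_def using assms F_less_1 by (intro frac_le) auto
qed

lemma Gfun_ge_self: "0 \<le> x \<Longrightarrow> x \<le> Gfun F \<beta> \<mu> x"
  using F_nonneg[of "\<beta> * \<mu> * x / 2"] F_less_1[of "\<beta> * \<mu> * x / 2"]
  by (simp add: Gfun_def le_divide_eq mult_left_le)

lemma Ginv_le_self: "0 \<le> y \<Longrightarrow> Ginv F \<beta> \<mu> y \<le> y"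
  unfolding Ginv_def using Gfun_ge_self by (intro cInf_lower bdd_belowI[of _ 0]) auto

lemma le_Ginv:
  assumes "0 \<le> x" "Gfun F \<beta> \<mu> x < y"
  shows "x \<le> Ginv F \<beta> \<mu> y"
  unfolding Ginv_def
proof (rule cInf_greatest)
  have "x < y"
    using assms Gfun_ge_self by fastforce
  then have "y \<in> {z. 0 \<le> z \<and> y \<le> Gfun F \<beta> \<mu> z}"
    using assms Gfun_ge_self[of y] by auto
  then show "{z. 0 \<le> z \<and> y \<le> Gfun F \<beta> \<mu> z} \<noteq> {}"
    by blast
  show "x \<le> z" if "z \<in> {z. 0 \<le> z \<and> y \<le> Gfun F \<beta> \<mu> z}" for z
    using that assms Gfun_mono[of z x] by force
qed

lemma Gfun_less_of_less_Ginv: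
  assumes "0 \<le> x" "x < Ginv F \<beta> \<mu> y"
  shows "Gfun F \<beta> \<mu> x < y"
proof (rule ccontr)
  assume "\<not> Gfun F \<beta> \<mu> x < y"
  then have "Ginv F \<beta> \<mu> y \<le> x"
    unfolding Ginv_def using assms(1) by (intro cInf_lower bdd_belowI[of _ 0]) auto
  then show False
    using assms(2) by simp
qed

lemma filterlim_Ginv_at_top: "filterlim (Ginv F \<beta> \<mu>) at_top at_top"
  unfolding filterlim_at_top
proof
  fix Z :: real
  show "\<forall>\<^sub>F y in at_top. Z \<le> Ginv F \<beta> \<mu> y"
    using eventually_gt_at_top[of "Gfun F \<beta> \<mu> (max Z 0)"]
    by eventually_elim (use le_Ginv[of "max Z 0"] in auto)
qed

lemma eventually_Ginv_sizing:
  assumes \<mu>: "0 < \<mu>" and \<beta>: "0 \<le> \<beta>" and k: "\<And>n. k n = nat \<lfloor>Ginv F \<beta> \<mu> (real n) / 32\<rfloor>"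
  shows "\<forall>\<^sub>F n in sequentially. 4 * real (k n) \<le> real n * (1 - F (\<beta> * (N0 + 4 * real (k n) * \<mu>)))
    \<and> Ginv F \<beta> \<mu> (real n) / 128 \<le> real (k n) / 2"
proof -
  have "\<forall>\<^sub>F n in sequentially. max 64 (8 * N0 / \<mu>) \<le> Ginv F \<beta> \<mu> (real n)"
    using filterlim_compose[OF filterlim_Ginv_at_top filterlim_real_sequentially]
    unfolding filterlim_at_top by (rule spec)
  then show ?thesis
  proof eventually_elim
    case (elim n)
    define L where "L = Ginv F \<beta> \<mu> (real n)"
    have L: "64 \<le> L" "N0 \<le> \<mu> * L / 8"
      using elim \<mu> by (auto simp: L_def field_simps)
    have kL: "L / 32 - 1 < real (k n)" "real (k n) \<le> L / 32"
      using L by (auto simp: k L_def[symmetric]) linarith+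
    have "real (k n) * \<mu> \<le> L / 32 * \<mu>"
      using kL(2) \<mu> by (intro mult_right_mono) auto
    then have "N0 + 4 * real (k n) * \<mu> \<le> \<mu> * L / 4"
      using L(2) by argo
    then have "\<beta> * (N0 + 4 * real (k n) * \<mu>) \<le> \<beta> * (\<mu> * L / 4)"
      using \<beta> by (rule mult_left_mono)
    also have "\<dots> = \<beta> * \<mu> * (L / 2) / 2"
      by (simp add: field_simps)
    finally have F: "F (\<beta> * (N0 + 4 * real (k n) * \<mu>)) \<le> F (\<beta> * \<mu> * (L / 2) / 2)"
      by (rule monoD[OF mono_F])
    have "Gfun F \<beta> \<mu> (L / 2) < real n"
      using L by (intro Gfun_less_of_less_Ginv) (auto simp: L_def)
    then have "L / 2 < real n * (1 - F (\<beta> * \<mu> * (L / 2) / 2))"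
      using F_less_1 by (simp add: Gfun_def divide_less_eq algebra_simps)
    also have "\<dots> \<le> real n * (1 - F (\<beta> * (N0 + 4 * real (k n) * \<mu>)))"
      using F by (intro mult_left_mono) auto
    finally have "4 * real (k n) \<le> real n * (1 - F (\<beta> * (N0 + 4 * real (k n) * \<mu>)))"
      using kL(2) L(1) by linarith
    moreover have "L / 128 \<le> real (k n) / 2"
      using kL(1) L(1) by linarith
    ultimately show ?case
      by (simp add: L_def)
  qed
qed

end

lemma real_card_Collect_eq_sum_of_bool:
  "finite A \<Longrightarrow> real (card {x\<in>A. P x}) = (\<Sum>x\<in>A. of_bool (P x))"
  by (simp add: Int_def)

locale iid_gains = prob_space +
  fixes \<gamma> :: "nat \<Rightarrow> nat \<Rightarrow> 'a \<Rightarrow> real" and f :: "real \<Rightarrow> ennreal" and F :: "real \<Rightarrow> real"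
    and \<mu> :: real
  assumes indep_gains: "indep_vars (\<lambda>_. borel) (\<lambda>(i, j). \<gamma> i j) UNIV"
    and gains_nonneg: "\<And>i j \<omega>. 0 \<le> \<gamma> i j \<omega>"
    and gains_density: "\<And>i j. distributed M lborel (\<gamma> i j) f"
    and gains_cdf: "\<And>i j x. prob {\<omega>\<in>space M. \<gamma> i j \<omega> \<le> x} = F x"
    and gains_integrable: "\<And>i j. integrable M (\<gamma> i j)"
    and gains_mean: "\<And>i j. expectation (\<gamma> i j) = \<mu>"
begin

lemma gain_measurable [measurable]: "\<gamma> i j \<in> borel_measurable M"
proof -
  have "(\<lambda>(i, j). \<gamma> i j) (i, j) \<in> borel_measurable M"
    using indep_gains by (auto simp: indep_vars_def)
  then show ?thesis
    by simp
qed

lemma mono_F: "mono F"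
proof
  fix x y :: real
  assume "x \<le> y"
  then have "prob {\<omega>\<in>space M. \<gamma> 0 0 \<omega> \<le> x} \<le> prob {\<omega>\<in>space M. \<gamma> 0 0 \<omega> \<le> y}"
    by (intro finite_measure_mono) auto
  then show "F x \<le> F y"
    by (simp add: gains_cdf)
qed

lemma F_nonneg: "0 \<le> F x"
  using gains_cdf[of 0 0 x] measure_nonneg by metis

lemma prob_gain_greater: "prob {\<omega>\<in>space M. \<theta> < \<gamma> i j \<omega>} = 1 - F \<theta>"
proof -
  have "{\<omega>\<in>space M. \<theta> < \<gamma> i j \<omega>} = space M - {\<omega>\<in>space M. \<gamma> i j \<omega> \<le> \<theta>}"
    by auto
  then show ?thesis
    by (simp add: prob_compl gains_cdf)
qed

lemma mean_pos:
  assumes "F 0 < 1"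
  shows "0 < \<mu>"
proof (rule ccontr)
  assume "\<not> 0 < \<mu>"
  moreover have "0 \<le> \<mu>"
    using gains_mean[of 0 0] gains_nonneg by (metis integral_nonneg_AE AE_I2)
  ultimately have "expectation (\<gamma> 0 0) = 0"
    by (simp add: gains_mean)
  then have "AE \<omega> in M. \<gamma> 0 0 \<omega> = 0"
    using gains_integrable gains_nonneg by (simp add: integral_nonneg_eq_0_iff_AE)
  then have "prob {\<omega>\<in>space M. \<gamma> 0 0 \<omega> \<le> 0} = 1"
    by (subst prob_Collect_eq_1) (auto elim: eventually_mono)
  then show False
    using assms by (simp add: gains_cdf)
qed

definition gain_block :: "(nat \<times> nat) set \<Rightarrow> 'a \<Rightarrow> nat \<times> nat \<Rightarrow> real" where
  "gain_block A \<omega> = (\<lambda>p\<in>A. \<gamma> (fst p) (snd p) \<omega>)"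

lemma indep_vars_gain_blocks:
  assumes "disjoint_family_on K L"
    and "\<And>l. l \<in> L \<Longrightarrow> h l \<in> borel_measurable (Pi\<^sub>M (K l) (\<lambda>_. borel))"
  shows "indep_vars (\<lambda>_. borel) (\<lambda>l \<omega>. h l (gain_block (K l) \<omega>)) L"
  using indep_vars_compose2[OF indep_vars_restrict[OF indep_gains _ assms(1)] assms(2)]
  by (simp add: gain_block_def case_prod_beta)

lemma indep_var_gain_blocks:
  "A \<inter> B = {} \<Longrightarrow>
    indep_var (Pi\<^sub>M A (\<lambda>_. borel)) (gain_block A) (Pi\<^sub>M B (\<lambda>_. borel)) (gain_block B)"
  using indep_var_restrict[OF indep_gains, of A B] by (simp add: gain_block_def[abs_def] case_prod_beta)

lemma AE_distinct_diagonal: "AE \<omega> in M. inj_on (\<lambda>i. \<gamma> i i \<omega>) {..<n}"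
proof -
  have "AE \<omega> in M. \<gamma> i i \<omega> \<noteq> \<gamma> j j \<omega>" if "i \<noteq> j" for i j
  proof -
    have "indep_var borel ((\<lambda>g. g (i, i)) \<circ> gain_block {(i, i)}) borel ((\<lambda>g. g (j, j)) \<circ> gain_block {(j, j)})"
      using that by (intro indep_var_compose[OF indep_var_gain_blocks]) auto
    then have "indep_var borel (\<gamma> i i) borel (\<gamma> j j)"
      by (simp add: gain_block_def comp_def)
    then have "prob {\<omega>\<in>space M. \<gamma> i i \<omega> = \<gamma> j j \<omega>} = 0"
      using gains_density by (rule prob_indep_eq_zero)
    then show ?thesis
      by (subst (asm) prob_Collect_eq_0) auto
  qed
  then have "AE \<omega> in M. \<forall>i\<in>{..<n}. \<forall>j\<in>{..<n}. i \<noteq> j \<longrightarrow> \<gamma> i i \<omega> \<noteq> \<gamma> j j \<omega>"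
    by (intro AE_finite_allI) auto
  then show ?thesis
    by eventually_elim (auto simp: inj_on_def)
qed

lemma prob_few_large_diagonal:
  assumes "4 * k \<le> real n * (1 - F \<theta>)"
  shows "prob {\<omega>\<in>space M. real (card {i\<in>{..<n}. \<theta> < \<gamma> i i \<omega>}) < k} \<le> exp (- k)"
proof -
  have "indep_vars (\<lambda>_. borel) (\<lambda>i \<omega>. of_bool (\<theta> < gain_block {(i, i)} \<omega> (i, i))) {..<n}"
  proof (rule indep_vars_gain_blocks)
    show "disjoint_family_on (\<lambda>i. {(i, i)}) {..<n}"
      by (auto simp: disjoint_family_on_def)
    show "(\<lambda>g. of_bool (\<theta> < g (i, i))) \<in> borel_measurable (Pi\<^sub>M {(i, i)} (\<lambda>_. borel))" for i
      unfolding of_bool_def by measurable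
  qed
  then have indep: "indep_vars (\<lambda>_. borel) (\<lambda>i \<omega>. of_bool (\<theta> < \<gamma> i i \<omega>)) {..<n}"
    by (simp add: gain_block_def)
  have "prob {\<omega>\<in>space M. (\<Sum>i\<in>{..<n}. of_bool (\<theta> < \<gamma> i i \<omega>)) < k} \<le> exp (- k)"
  proof (rule prob_sum_Bernoulli_less[OF finite_lessThan indep])
    show "1 - F \<theta> \<le> prob {\<omega>\<in>space M. of_bool (\<theta> < \<gamma> i i \<omega>) = (1::real)}" for i
      using prob_gain_greater[of \<theta> i i] by simp
  qed (use assms gains_cdf[of 0 0 \<theta>] prob_le_1[of "{\<omega>\<in>space M. \<gamma> 0 0 \<omega> \<le> \<theta>}"] in auto)
  then show ?thesis
    by (simp only: real_card_Collect_eq_sum_of_bool[OF finite_lessThan])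
qed

definition strict_top_event :: "nat \<Rightarrow> nat set \<Rightarrow> 'a set" where
  "strict_top_event n S = {\<omega>\<in>space M. \<forall>i\<in>S. \<forall>j\<in>{..<n} - S. \<gamma> j j \<omega> < \<gamma> i i \<omega>}"

definition interference_event :: "real \<Rightarrow> nat set \<Rightarrow> 'a set" where
  "interference_event t S =
    {\<omega>\<in>space M. real (card S) / 2 \<le> real (card {i\<in>S. t \<le> (\<Sum>j\<in>S - {i}. \<gamma> j i \<omega>)})}"

lemma strict_top_event_measurable [measurable]: "finite S \<Longrightarrow> strict_top_event n S \<in> events"
  unfolding strict_top_event_def by measurable

lemma interference_event_eq:
  "finite S \<Longrightarrow> interference_event t S =
    {\<omega>\<in>space M. real (card S) / 2 \<le> (\<Sum>i\<in>S. of_bool (t \<le> (\<Sum>j\<in>S - {i}. \<gamma> j i \<omega>)))}"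
  by (simp add: interference_event_def real_card_Collect_eq_sum_of_bool)

lemma interference_event_measurable [measurable]: "finite S \<Longrightarrow> interference_event t S \<in> events"
  unfolding interference_event_eq of_bool_def by measurable

lemma disjoint_strict_top_events:
  "disjoint_family_on (strict_top_event n) {S. S \<subseteq> {..<n} \<and> card S = k}"
  unfolding disjoint_family_on_def
proof (intro ballI impI)
  fix S S' assume S: "S \<in> {S. S \<subseteq> {..<n} \<and> card S = k}" and S': "S' \<in> {S. S \<subseteq> {..<n} \<and> card S = k}"
    and "S \<noteq> S'"
  have "\<not> S \<subseteq> S'" "\<not> S' \<subseteq> S"
    using S S' \<open>S \<noteq> S'\<close> card_subset_eq[of S' S] card_subset_eq[of S S'] finite_subset by auto
  then obtain i j where i: "i \<in> S" "i \<notin> S'" and j: "j \<in> S'" "j \<notin> S"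
    by blast
  have "i < n" "j < n"
    using i j S S' by auto
  have False if "\<omega> \<in> strict_top_event n S" "\<omega> \<in> strict_top_event n S'" for \<omega>
  proof -
    have "\<gamma> j j \<omega> < \<gamma> i i \<omega>"
      using that(1) i j \<open>j < n\<close> unfolding strict_top_event_def by blast
    moreover have "\<gamma> i i \<omega> < \<gamma> j j \<omega>"
      using that(2) i j \<open>i < n\<close> unfolding strict_top_event_def by blast
    ultimately show False
      by simp
  qed
  then show "strict_top_event n S \<inter> strict_top_event n S' = {}"
    by blast
qed

text \<open>The ranking uses only diagonal gains, the interference only off-diagonal gains
  among the pairs in \<open>S\<close>: these are disjoint blocks of the independent family.\<close>

lemma prob_strict_top_Int_interference:
  assumes "S \<subseteq> {..<n}"
  shows "prob (strict_top_event n S \<inter> interference_event t S) =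
    prob (strict_top_event n S) * prob (interference_event t S)"
proof -
  have fin: "finite S"
    using assms finite_subset by blast
  define A where "A = (\<lambda>i. (i, i)) ` {..<n}"
  define B where "B = {p. fst p \<in> S \<and> snd p \<in> S \<and> fst p \<noteq> snd p}"
  define U where "U = {g \<in> space (Pi\<^sub>M A (\<lambda>_. borel)). \<forall>i\<in>S. \<forall>j\<in>{..<n} - S. g (j, j) < (g (i, i) :: real)}"
  define V where "V = {g \<in> space (Pi\<^sub>M B (\<lambda>_. borel)).
    real (card S) / 2 \<le> (\<Sum>i\<in>S. of_bool (t \<le> (\<Sum>j\<in>S - {i}. g (j, i))) :: real)}"
  have U: "U \<in> sets (Pi\<^sub>M A (\<lambda>_. borel))"
    unfolding U_def by measurable (use assms in \<open>auto simp: A_def intro!: measurable_component_singleton\<close>)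
  have V: "V \<in> sets (Pi\<^sub>M B (\<lambda>_. borel))"
    unfolding V_def of_bool_def using fin by measurable (auto simp: B_def)
  have strict: "gain_block A -` U \<inter> space M = strict_top_event n S"
    using assms by (auto simp: U_def strict_top_event_def A_def gain_block_def space_PiM)
  have "(\<Sum>i\<in>S. of_bool (t \<le> (\<Sum>j\<in>S - {i}. gain_block B \<omega> (j, i))) :: real) =
      (\<Sum>i\<in>S. of_bool (t \<le> (\<Sum>j\<in>S - {i}. \<gamma> j i \<omega>)))" for \<omega>
    by (intro sum.cong refl) (auto simp: B_def gain_block_def intro!: sum.cong)
  moreover have "gain_block B \<omega> \<in> space (Pi\<^sub>M B (\<lambda>_. borel))" for \<omega>
    by (simp add: gain_block_def space_PiM)
  ultimately have interference: "gain_block B -` V \<inter> space M = interference_event t S"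
    using fin by (auto simp: V_def interference_event_eq)
  have "A \<inter> B = {}"
    by (auto simp: A_def B_def)
  then have "prob ((\<lambda>\<omega>. (gain_block A \<omega>, gain_block B \<omega>)) -` (U \<times> V) \<inter> space M) =
      prob (strict_top_event n S) * prob (interference_event t S)"
    unfolding strict[symmetric] interference[symmetric] using U V by (rule indep_varD[OF indep_var_gain_blocks])
  moreover have "(\<lambda>\<omega>. (gain_block A \<omega>, gain_block B \<omega>)) -` (U \<times> V) \<inter> space M =
      strict_top_event n S \<inter> interference_event t S"
    unfolding strict[symmetric] interference[symmetric] by auto
  ultimately show ?thesis
    by simp
qed

lemma prob_interference_event:
  assumes S: "finite S" "S \<noteq> {}" and \<mu>: "0 < \<mu>"
  defines "t \<equiv> 4 * real (card S) * \<mu>"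
  shows "prob (interference_event t S) \<le> exp (- real (card S) / 8)"
proof -
  define K where "K i = (\<lambda>j. (j, i)) ` (S - {i})" for i
  have "indep_vars (\<lambda>_. borel)
      (\<lambda>i \<omega>. of_bool (t \<le> (\<Sum>j\<in>S - {i}. gain_block (K i) \<omega> (j, i)))) S"
  proof (rule indep_vars_gain_blocks)
    show "disjoint_family_on K S"
      by (auto simp: disjoint_family_on_def K_def)
    show "(\<lambda>g. of_bool (t \<le> (\<Sum>j\<in>S - {i}. g (j, i)))) \<in> borel_measurable (Pi\<^sub>M (K i) (\<lambda>_. borel))" for i
      unfolding of_bool_def K_def using S by measurable
  qed
  moreover have "(\<Sum>j\<in>S - {i}. gain_block (K i) \<omega> (j, i)) = (\<Sum>j\<in>S - {i}. \<gamma> j i \<omega>)" for i \<omega>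
    by (intro sum.cong) (auto simp: K_def gain_block_def)
  ultimately have indep: "indep_vars (\<lambda>_. borel) (\<lambda>i \<omega>. of_bool (t \<le> (\<Sum>j\<in>S - {i}. \<gamma> j i \<omega>))) S"
    by simp
  have "prob {\<omega>\<in>space M. of_bool (t \<le> (\<Sum>j\<in>S - {i}. \<gamma> j i \<omega>)) = (1::real)} \<le> 1 / 4" for i
  proof -
    have "prob {\<omega>\<in>space M. t \<le> (\<Sum>j\<in>S - {i}. \<gamma> j i \<omega>)} \<le> real (card (S - {i})) * \<mu> / t"
      using S \<mu> by (intro prob_sum_ge_Markov) (auto simp: t_def card_gt_0_iff gains_integrable gains_nonneg gains_mean)
    also have "\<dots> \<le> real (card S) * \<mu> / t"
      using S \<mu> by (intro divide_right_mono mult_right_mono) (auto simp: t_def card_Diff1_le)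
    also have "\<dots> = 1 / 4"
      using S \<mu> by (simp add: t_def card_gt_0_iff)
    finally show ?thesis
      by simp
  qed
  then have "prob {\<omega>\<in>space M. real (card S) / 2 \<le> (\<Sum>i\<in>S. of_bool (t \<le> (\<Sum>j\<in>S - {i}. \<gamma> j i \<omega>)))}
      \<le> exp (- real (card S) / 8)"
    by (intro prob_sum_Bernoulli_ge_half[OF S indep]) auto
  then show ?thesis
    using S by (simp add: interference_event_eq)
qed

definition throughput_event :: "real \<Rightarrow> real \<Rightarrow> nat \<Rightarrow> nat \<Rightarrow> real \<Rightarrow> 'a set" where
  "throughput_event \<beta> N0 n k C = {\<omega>\<in>space M. \<forall>S. top_set (\<lambda>i j. \<gamma> i j \<omega>) n k S \<longrightarrow>
     C \<le> real (throughput (\<lambda>i j. \<gamma> i j \<omega>) N0 \<beta> S)}"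

lemma throughput_event_measurable [measurable]: "throughput_event \<beta> N0 n k C \<in> events"
proof -
  have "throughput_event \<beta> N0 n k C = space M \<inter> (\<Inter>S\<in>Pow {..<n}. {\<omega>\<in>space M.
      top_set (\<lambda>i j. \<gamma> i j \<omega>) n k S \<longrightarrow> C \<le> real (throughput (\<lambda>i j. \<gamma> i j \<omega>) N0 \<beta> S)})"
    by (auto simp: throughput_event_def top_set_def)
  also have "\<dots> \<in> events"
  proof (intro sets.Int sets.top sets.finite_INT)
    fix S assume "S \<in> Pow {..<n}"
    then have "finite S"
      by (auto intro: finite_subset)
    then have "real (throughput (\<lambda>i j. \<gamma> i j \<omega>) N0 \<beta> S) =
        (\<Sum>i\<in>S. of_bool (\<beta> * (N0 + (\<Sum>j\<in>S - {i}. \<gamma> j i \<omega>)) < \<gamma> i i \<omega>))" for \<omega>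
      by (simp add: throughput_def real_card_Collect_eq_sum_of_bool)
    with \<open>finite S\<close> show "{\<omega>\<in>space M. top_set (\<lambda>i j. \<gamma> i j \<omega>) n k S \<longrightarrow>
        C \<le> real (throughput (\<lambda>i j. \<gamma> i j \<omega>) N0 \<beta> S)} \<in> events"
      unfolding top_set_def of_bool_def by simp measurable
  qed auto
  finally show ?thesis .
qed

lemma throughput_event_failure:
  assumes \<beta>: "0 \<le> \<beta>" and C: "C \<le> real k / 2"
    and \<omega>: "\<omega> \<in> space M" "\<omega> \<notin> throughput_event \<beta> N0 n k C"
    and distinct: "inj_on (\<lambda>i. \<gamma> i i \<omega>) {..<n}"
    and many: "k \<le> card {i\<in>{..<n}. \<beta> * (N0 + t) < \<gamma> i i \<omega>}"
  obtains S where "S \<subseteq> {..<n}" "card S = k" "\<omega> \<in> strict_top_event n S \<inter> interference_event t S"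
proof -
  obtain S where top: "top_set (\<lambda>i j. \<gamma> i j \<omega>) n k S"
    and low: "real (throughput (\<lambda>i j. \<gamma> i j \<omega>) N0 \<beta> S) < C"
    using \<omega> by (auto simp: throughput_event_def not_le)
  then have S: "S \<subseteq> {..<n}" "card S = k"
    by (auto simp: top_set_def)
  have "\<gamma> j j \<omega> < \<gamma> i i \<omega>" if "i \<in> S" "j \<in> {..<n} - S" for i j
    using top that distinct S(1) by (force simp: top_set_def inj_on_def order.order_iff_strict)
  then have "\<omega> \<in> strict_top_event n S"
    using \<omega> by (simp add: strict_top_event_def)
  moreover have "\<omega> \<in> interference_event t S"
    using throughput_top_set_ge[OF top \<beta> many] low C \<omega> S(2) by (simp add: interference_event_def)
  ultimately show ?thesis
    using that S by blast
qed

lemma prob_throughput_event_ge: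
  assumes \<beta>: "0 \<le> \<beta>" and \<mu>: "0 < \<mu>" and k: "1 \<le> k" and C: "C \<le> real k / 2"
    and many: "4 * real k \<le> real n * (1 - F (\<beta> * (N0 + 4 * real k * \<mu>)))"
  shows "1 - exp (- real k) - exp (- real k / 8) \<le> prob (throughput_event \<beta> N0 n k C)"
proof -
  define t where "t = 4 * real k * \<mu>"
  define Few where "Few = {\<omega>\<in>space M. real (card {i\<in>{..<n}. \<beta> * (N0 + t) < \<gamma> i i \<omega>}) < real k}"
  define SS where "SS = {S. S \<subseteq> {..<n} \<and> card S = k}"
  define Bad where "Bad = Few \<union> (\<Union>S\<in>SS. strict_top_event n S \<inter> interference_event t S)"
  have SS: "finite SS" "\<And>S. S \<in> SS \<Longrightarrow> finite S"
    by (auto simp: SS_def intro: finite_subset[of _ "Pow {..<n}"] finite_subset)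
  have Few_event [measurable]: "Few \<in> events"
    unfolding Few_def real_card_Collect_eq_sum_of_bool[OF finite_lessThan] of_bool_def by measurable
  have Bad_event: "Bad \<in> events"
    unfolding Bad_def using SS
    by (intro sets.Un sets.finite_UN sets.Int Few_event strict_top_event_measurable
        interference_event_measurable) auto
  have "AE \<omega> in M. \<omega> \<in> space M - throughput_event \<beta> N0 n k C \<longrightarrow> \<omega> \<in> Bad"
    using AE_distinct_diagonal[of n]
  proof eventually_elim
    case (elim \<omega>)
    show ?case
    proof (intro impI)
      assume \<omega>: "\<omega> \<in> space M - throughput_event \<beta> N0 n k C"
      show "\<omega> \<in> Bad"
      proof (cases "\<omega> \<in> Few")
        case False
        with \<omega> obtain S where "S \<subseteq> {..<n}" "card S = k"
          "\<omega> \<in> strict_top_event n S \<inter> interference_event t S"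
          using throughput_event_failure[OF \<beta> C _ _ elim] by (auto simp: Few_def not_less)
        then show ?thesis
          by (auto simp: Bad_def SS_def)
      qed (simp add: Bad_def)
    qed
  qed
  then have "prob (space M - throughput_event \<beta> N0 n k C) \<le> prob Bad"
    using Bad_event by (rule finite_measure_mono_AE)
  also have "\<dots> \<le> prob Few + (\<Sum>S\<in>SS. prob (strict_top_event n S \<inter> interference_event t S))"
    unfolding Bad_def using SS
    by (intro order.trans[OF measure_Un_le] add_left_mono finite_measure_subadditive_finite) auto
  also have "\<dots> \<le> exp (- real k) + (\<Sum>S\<in>SS. prob (strict_top_event n S) * exp (- real k / 8))"
  proof (intro add_mono sum_mono)
    show "prob Few \<le> exp (- real k)"
      unfolding Few_def t_def using many by (rule prob_few_large_diagonal)
    show "prob (strict_top_event n S \<inter> interference_event t S) \<le> prob (strict_top_event n S) * exp (- real k / 8)"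
      if "S \<in> SS" for S
    proof -
      have S: "finite S" "S \<noteq> {}" "S \<subseteq> {..<n}" "card S = k"
        using that k unfolding SS_def by (auto intro: finite_subset)
      then have "prob (interference_event t S) \<le> exp (- real k / 8)"
        using prob_interference_event[OF S(1,2) \<mu>] unfolding t_def by simp
      then show ?thesis
        unfolding prob_strict_top_Int_interference[OF S(3)] by (rule mult_left_mono) simp
    qed
  qed
  also have "\<dots> \<le> exp (- real k) + exp (- real k / 8)"
  proof -
    have "prob (\<Union>S\<in>SS. strict_top_event n S) = (\<Sum>S\<in>SS. prob (strict_top_event n S))"
      using SS(2) by (intro finite_measure_finite_Union[OF SS(1) _ disjoint_strict_top_events[of n k, folded SS_def]])
        auto
    then have "(\<Sum>S\<in>SS. prob (strict_top_event n S)) \<le> 1"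
      by (metis prob_le_1)
    then show ?thesis
      by (simp add: sum_distrib_right[symmetric])
  qed
  finally show ?thesis
    by (simp add: prob_compl)
qed

lemma tendsto_prob_throughput_event:
  assumes \<beta>: "0 \<le> \<beta>" and \<mu>: "0 < \<mu>" and k: "filterlim k at_top sequentially"
    and sizing: "\<forall>\<^sub>F n in sequentially.
      4 * real (k n) \<le> real n * (1 - F (\<beta> * (N0 + 4 * real (k n) * \<mu>))) \<and> C n \<le> real (k n) / 2"
  shows "(\<lambda>n. prob (throughput_event \<beta> N0 n (k n) (C n))) \<longlonglongrightarrow> 1"
proof (rule tendsto_sandwich[where h="\<lambda>_. 1"])
  have "((\<lambda>x::real. 1 - exp (- x) - exp (- x / 8)) \<longlongrightarrow> 1) at_top"
    by real_asymp
  then show "(\<lambda>n. 1 - exp (- real (k n)) - exp (- real (k n) / 8)) \<longlonglongrightarrow> 1"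
    by (rule filterlim_compose) (rule filterlim_compose[OF filterlim_real_sequentially k])
  show "\<forall>\<^sub>F n in sequentially. 1 - exp (- real (k n)) - exp (- real (k n) / 8)
      \<le> prob (throughput_event \<beta> N0 n (k n) (C n))"
  proof -
    have "\<forall>\<^sub>F n in sequentially. 1 \<le> k n"
      using k unfolding filterlim_at_top by (rule spec)
    with sizing show ?thesis
      by eventually_elim (intro prob_throughput_event_ge[OF \<beta> \<mu>], auto)
  qed
qed simp_all

end

theorem theorem1:
  fixes M :: "'a measure"
    and \<gamma> :: "nat \<Rightarrow> nat \<Rightarrow> 'a \<Rightarrow> real"
    and f F :: "real \<Rightarrow> real"
    and \<mu> \<beta> N0 :: real
  assumes "prob_space M"
    and indep: "prob_space.indep_vars M (\<lambda>_. borel) (\<lambda>(i, j). \<gamma> i j) UNIV"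
    and nonneg: "\<And>i j \<omega>. \<gamma> i j \<omega> \<ge> 0"
    and f_nonneg: "\<And>x. f x \<ge> 0"
    and density: "\<And>i j. distributed M lborel (\<gamma> i j) (\<lambda>x. ennreal (f x))"
    and cdf: "\<And>i j x. measure M {\<omega> \<in> space M. \<gamma> i j \<omega> \<le> x} = F x"
    and integ: "\<And>i j. integrable M (\<gamma> i j)"
    and mean: "\<And>i j. integral\<^sup>L M (\<gamma> i j) = \<mu>"
    and "\<beta> > 0" and "N0 \<ge> 0"
    and cond1: "condition_set_1 f F"
    and type: "NHT_type M (\<gamma> 0 0) \<or> HT_type F"
  shows "\<exists>k :: nat \<Rightarrow> nat. \<exists>c > 0. (\<forall>n. k n \<le> n) \<and>
    ((\<lambda>n. measure M {\<omega> \<in> space M. \<forall>S. top_set (\<lambda>i j. \<gamma> i j \<omega>) n (k n) S \<longrightarrow>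
         c * Ginv F \<beta> \<mu> (real n) \<le> real (throughput (\<lambda>i j. \<gamma> i j \<omega>) N0 \<beta> S)})
      \<longlonglongrightarrow> 1)"
proof -
  interpret iid_gains M \<gamma> "\<lambda>x. ennreal (f x)" F \<mu>
    by (intro iid_gains.intro iid_gains_axioms.intro) (use assms in auto)
  have F_less_1: "\<And>x. F x < 1"
    using cond1 by (simp add: condition_set_1_def)
  have \<mu>: "0 < \<mu>" and \<beta>: "0 \<le> \<beta>"
    using mean_pos F_less_1 \<open>\<beta> > 0\<close> by auto
  note Ginv_facts = mono_F F_nonneg F_less_1 mult_nonneg_nonneg[OF \<beta> less_imp_le[OF \<mu>]]
  define k where "k n = nat \<lfloor>Ginv F \<beta> \<mu> (real n) / 32\<rfloor>" for n
  have "k n \<le> n" for n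
    using Ginv_le_self[OF Ginv_facts, of "real n"] by (simp add: k_def nat_le_iff floor_le_iff)
  moreover have "filterlim k at_top sequentially"
  proof -
    have "filterlim (\<lambda>x::real. nat \<lfloor>x / 32\<rfloor>) at_top at_top"
      using filterlim_compose[OF filterlim_nat_sequentially filterlim_floor_sequentially]
      by (rule filterlim_compose) real_asymp
    then show ?thesis
      unfolding k_def
      by (rule filterlim_compose[OF _ filterlim_compose[OF filterlim_Ginv_at_top[OF Ginv_facts]
          filterlim_real_sequentially]])
  qed
  ultimately show ?thesis
    using tendsto_prob_throughput_event[OF \<beta> \<mu> _ eventually_Ginv_sizing[OF Ginv_facts \<mu> \<beta> k_def]]
    by (intro exI[of _ k] exI[of _ "1 / 128"]) (auto simp: throughput_event_def)
qed

end
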